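(* Let $m$ be a positive integer, and let $A=\{a_s(n_s)\}_{s=1}^k$ with positive integers $n_s$ and integers $0\leqslant a_s<n_s$. Let $p$ be any prime with $p>|S(n_1,\ldots,n_k)|$. Then $A$ is an exact $m$-cover of $\mathbb Z$ (i.e., $|\{1\leqslant s\leqslant k: x\equiv a_s\pmod{n_s}\}|=m$ for every $x\in\mathbb Z$) if and only if $$\sum_{s=1}^k\frac{e^{2\pi i a_s/p}}{1-e^{2\pi i n_s/p}}=\frac{m}{1-e^{2\pi i/p}}.$$
   Context: For a positive integer $n$ and $a\in\{0,\ldots,n-1\}$, $a(n)$ denotes the residue class $\{x\in\mathbb Z: x\equiv a \pmod n\}$. For positive integers $n_1,\ldots,n_k$, $S(n_1,\ldots,n_k)=\{r/n_s: r=0,\ldots,n_s-1;\ s=1,\ldots,k\}$, a set of rational numbers, and $|S(\cdot)|$ denotes its cardinality. *)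

theory Defs
  imports Complex_Main "HOL-Computational_Algebra.Primes"
begin

definition res_class :: "int \<Rightarrow> int \<Rightarrow> int set" where
  "res_class a n = {x. x mod n = a mod n}"

definition S_set :: "nat \<Rightarrow> (nat \<Rightarrow> int) \<Rightarrow> rat set" where
  "S_set k n = {of_int r / of_int (n s) | r s. s \<in> {1..k} \<and> 0 \<le> r \<and> r < n s}"

definition exact_m_cover :: "nat \<Rightarrow> nat \<Rightarrow> (nat \<Rightarrow> int) \<Rightarrow> (nat \<Rightarrow> int) \<Rightarrow> bool" where
  "exact_m_cover m k a n \<longleftrightarrow>
     (\<forall>x::int. card {s \<in> {1..k}. x \<in> res_class (a s) (n s)} = m)"

end

theory Submission
  imports Defs "Berlekamp_Zassenhaus.Factor_Bound"
begin

text \<open>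
  Let z be a primitive p-th root of unity, N the product of the moduli n_s, and
  c(x) the number of s with x = a_s (mod n_s). Summing geometric series over the
  residue classes below N, the polynomial E(w) = (sum over x < N of (c(x) - m) w^x)
  equals (1 - w^N) (sum_s w^a_s / (1 - w^n_s) - m / (1 - w)) at every w that is not
  an n_s-th root of unity for any s. Every n_s-th root of unity is cis (2 pi r / n_s)
  with r / n_s in S, so n_s <= |S| < p; hence p does not divide N, z^N \<noteq> 1, and the
  identity at z says exactly E(z) = 0.

  Conversely, suppose E(z) = 0. As E has integer coefficients and 1 + X + ... + X^(p-1)
  is irreducible over the rationals (Eisenstein after X \<mapsto> X + 1), E vanishes at all
  p - 1 primitive p-th roots of unity. By the factorisation it also vanishes at the
  N-th roots of unity outside the fewer than p roots of some w^n_s = 1. These are at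
  least N distinct roots of a polynomial of degree < N, so E = 0: every c(x) equals m.
\<close>

lemma prime_elem_dvd_low_coeffs_of_mult:
  fixes f g :: "'a::comm_ring_1 poly"
  assumes q: "prime_elem q" and g0: "\<not> q dvd coeff g 0"
    and fg: "\<forall>i\<le>d. q dvd coeff (f * g) i" and "j \<le> d"
  shows "q dvd coeff f j"
  using \<open>j \<le> d\<close>
proof (induction j rule: less_induct)
  case (less j)
  have "coeff (f * g) j = (\<Sum>i<j. coeff f i * coeff g (j - i)) + coeff f j * coeff g 0"
    by (simp add: coeff_mult lessThan_Suc_atMost[symmetric])
  moreover have "q dvd (\<Sum>i<j. coeff f i * coeff g (j - i))"
    using less by (intro dvd_sum) simp
  ultimately have "q dvd coeff f j * coeff g 0"
    using fg less.prems by (metis dvd_add_right_iff)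
  then show ?case
    using q g0 by (simp add: prime_elem_dvd_mult_iff)
qed

definition geom_poly :: "nat \<Rightarrow> 'a::comm_semiring_1 poly" where
  "geom_poly p = (\<Sum>i<p. monom 1 i)"

lemma coeff_geom_poly: "coeff (geom_poly p) i = (if i < p then 1 else 0)"
  by (simp add: geom_poly_def coeff_sum)

lemma poly_geom_poly: "poly (geom_poly p) z = (\<Sum>i<p. z ^ i)"
  by (simp add: geom_poly_def poly_sum poly_monom)

lemma geom_poly_times_X_minus_1: "geom_poly p * [:-1, 1:] = monom 1 p - (1 :: 'a::comm_ring_1 poly)"
proof (induction p)
  case (Suc p)
  have "monom (1::'a) p * [:-1, 1:] = monom 1 (Suc p) - monom 1 p"
    by (simp add: monom_altdef algebra_simps)
  with Suc show ?case
    by (simp add: geom_poly_def algebra_simps)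
qed (simp add: geom_poly_def)

lemma of_int_poly_geom_poly: "of_int_poly (geom_poly p) = (geom_poly p :: 'a::comm_ring_1 poly)"
  by (simp add: geom_poly_def hom_distribs)

lemma poly_geom_poly_root_of_unity:
  fixes w :: "'a::field"
  assumes "w ^ p = 1" "w \<noteq> 1"
  shows "poly (geom_poly p) w = 0"
  using assms by (simp add: poly_geom_poly sum_gp_strict)

lemma coeff_geom_poly_shift:
  "coeff (geom_poly p \<circ>\<^sub>p [:1, 1:]) j = (of_nat (p choose Suc j) :: 'a::comm_ring_1)"
proof -
  define F :: "'a poly" where "F = geom_poly p \<circ>\<^sub>p [:1, 1:]"
  have "F * [:0, 1:] = F * ([:-1, 1:] \<circ>\<^sub>p [:1, 1:])"
    by (simp add: pcompose_pCons)
  also have "\<dots> = (geom_poly p * [:-1, 1:]) \<circ>\<^sub>p [:1, 1:]"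
    unfolding F_def by (rule pcompose_mult[symmetric])
  also have "\<dots> = [:1, 1:] ^ p - 1"
    unfolding geom_poly_times_X_minus_1
    by (simp add: pcompose_diff monom_altdef pcompose_pCons pcompose_hom.hom_power)
  finally have F: "F * [:0, 1:] = [:1, 1:] ^ p - 1" .
  have "coeff F j = coeff (F * [:0, 1:]) (Suc j)"
    by (simp add: mult.commute[of F])
  also have "\<dots> = of_nat (p choose Suc j)"
  proof (cases "Suc j \<le> p")
    case True
    then show ?thesis
      unfolding F using coeff_linear_poly_power[of "Suc j" p "1::'a" 1] by simp
  next
    case False
    then show ?thesis
      unfolding F using degree_linear_power[of "1::'a" p] by (simp add: coeff_eq_0 binomial_eq_0)
  qed
  finally show ?thesis
    unfolding F_def .
qed

lemma dvd_coeff_0_of_shifted_geom_poly_factor: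
  fixes G H :: "int poly"
  assumes p: "prime p" and FGH: "geom_poly p \<circ>\<^sub>p [:1, 1:] = G * H" and dH: "0 < degree H"
  shows "int p dvd coeff H 0"
proof (rule ccontr)
  assume H0: "\<not> int p dvd coeff H 0"
  define F :: "int poly" where "F = geom_poly p \<circ>\<^sub>p [:1, 1:]"
  have p2: "p \<ge> 2" using p prime_ge_2_nat by blast
  have cF: "coeff F j = int (p choose Suc j)" for j
    unfolding F_def by (rule coeff_geom_poly_shift)
  have degF: "degree F = p - 1"
  proof (rule antisym)
    show "degree F \<le> p - 1" by (rule degree_le) (auto simp: cF)
    show "p - 1 \<le> degree F" using p2 by (intro le_degree) (simp add: cF)
  qed
  have lcF: "lead_coeff F = 1" using p2 by (simp add: degF cF)
  have F_GH: "F = G * H" using FGH by (simp add: F_def)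
  have "G \<noteq> 0" "H \<noteq> 0" using F_GH lcF by auto
  then have "degree G + degree H = p - 1" using F_GH degF by (simp add: degree_mult_eq)
  then have "\<forall>i\<le>degree G. int p dvd coeff (G * H) i"
    using dH p by (auto simp: F_GH[symmetric] cF intro: dvd_choose_prime)
  then have "int p dvd lead_coeff G"
    using prime_elem_dvd_low_coeffs_of_mult[OF _ H0] p by simp
  moreover have "lead_coeff G * lead_coeff H = 1" using F_GH lcF by (simp add: lead_coeff_mult)
  ultimately have "int p dvd 1" by (metis dvd_mult2)
  then show False using p2 by simp
qed

lemma geom_poly_prime_factors_int:
  fixes g h :: "int poly"
  assumes p: "prime p" and gh: "geom_poly p = g * h"
  shows "degree g = 0 \<or> degree h = 0"
proof (rule ccontr)
  assume "\<not> (degree g = 0 \<or> degree h = 0)"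
  define G H where "G = g \<circ>\<^sub>p [:1, 1:]" and "H = h \<circ>\<^sub>p [:1, 1:]"
  have FGH: "geom_poly p \<circ>\<^sub>p [:1, 1:] = G * H"
    unfolding G_def H_def gh by (rule pcompose_mult)
  have "0 < degree G" "0 < degree H"
    using \<open>\<not> (degree g = 0 \<or> degree h = 0)\<close> by (simp_all add: G_def H_def degree_pcompose)
  then have "int p dvd coeff G 0" "int p dvd coeff H 0"
    using dvd_coeff_0_of_shifted_geom_poly_factor[OF p] FGH by (metis mult.commute)+
  moreover have "coeff G 0 * coeff H 0 = int p"
    using coeff_geom_poly_shift[where 'a = int, of p 0] unfolding FGH coeff_mult_0 by simp
  ultimately have "int p * int p dvd int p * 1"
    by (metis mult_dvd_mono mult_1_right)
  then have "int p dvd 1"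
    using prime_gt_0_nat[OF p] by (subst (asm) dvd_mult_cancel_left) auto
  then show False using p by simp
qed

lemma geom_poly_prime_factors_rat:
  fixes g h :: "rat poly"
  assumes "prime p" and "geom_poly p = g * h"
  shows "degree g = 0 \<or> degree h = 0"
proof -
  have "of_int_poly (geom_poly p) = g * h"
    using assms(2) by (simp add: of_int_poly_geom_poly)
  then obtain g' h' :: "int poly" where "geom_poly p = g' * h'" "degree g' = degree g" "degree h' = degree h"
    using rat_to_int_factor by blast
  then show ?thesis
    using geom_poly_prime_factors_int[OF assms(1)] by metis
qed

interpretation of_rat_poly: map_poly_idom_hom "of_rat :: rat \<Rightarrow> 'a::field_char_0" ..
interpretation of_rat_gcd: field_hom' "of_rat :: rat \<Rightarrow> 'a::{field_char_0,field_gcd}" ..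

lemma dvd_if_common_root_of_irreducible:
  fixes f g :: "rat poly" and z :: "'a::{field_char_0,field_gcd}"
  assumes irr: "\<And>u v. f = u * v \<Longrightarrow> degree u = 0 \<or> degree v = 0" and "f \<noteq> 0"
    and f_z: "poly (map_poly of_rat f) z = 0" and g_z: "poly (map_poly of_rat g) z = 0"
  shows "f dvd g"
proof -
  define d where "d = gcd f g"
  have "[:-z, 1:] dvd gcd (map_poly of_rat f) (map_poly of_rat g)"
    using f_z g_z by (simp add: poly_eq_0_iff_dvd)
  then have d_z: "poly (map_poly of_rat d) z = 0"
    by (simp add: d_def of_rat_gcd.map_poly_gcd poly_eq_0_iff_dvd)
  have "degree d \<noteq> 0"
  proof
    assume "degree d = 0"
    then obtain c where "d = [:c:]" by (rule degree_eq_zeroE)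
    moreover have "d \<noteq> 0" using \<open>f \<noteq> 0\<close> by (simp add: d_def)
    ultimately show False using d_z by simp
  qed
  obtain e where f_de: "f = d * e" unfolding d_def by (meson gcd_dvd1 dvdE)
  then have "degree e = 0" using irr[OF f_de] \<open>degree d \<noteq> 0\<close> by blast
  then obtain c where "e = [:c:]" by (rule degree_eq_zeroE)
  with f_de \<open>f \<noteq> 0\<close> have "d = smult (inverse c) f" and "c \<noteq> 0" by auto
  then have "f dvd d" by (simp add: dvd_smult)
  also have "d dvd g" by (simp add: d_def)
  finally show ?thesis .
qed

lemma of_int_poly_root_at_prime_roots_of_unity:
  fixes R :: "int poly" and z w :: "'a::{field_char_0,field_gcd}"
  assumes p: "prime p" and z: "z ^ p = 1" "z \<noteq> 1" and R_z: "poly (of_int_poly R) z = 0"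
    and w: "w ^ p = 1" "w \<noteq> 1"
  shows "poly (of_int_poly R) w = 0"
proof -
  have of_rat_of_int: "map_poly of_rat (of_int_poly Q :: rat poly) = (of_int_poly Q :: 'a poly)"
    for Q :: "int poly"
    by (simp add: map_poly_map_poly o_def)
  have of_rat_geom: "map_poly of_rat (geom_poly p :: rat poly) = (geom_poly p :: 'a poly)"
    by (simp add: geom_poly_def hom_distribs)
  have "geom_poly p \<noteq> (0 :: rat poly)"
    using prime_gt_0_nat[OF p] by (metis coeff_0 coeff_geom_poly zero_neq_one)
  then have "geom_poly p dvd (of_int_poly R :: rat poly)"
    using geom_poly_prime_factors_rat[OF p] poly_geom_poly_root_of_unity[OF z] R_z
    by (intro dvd_if_common_root_of_irreducible[where z = z]) (simp_all add: of_rat_of_int of_rat_geom)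
  then have "geom_poly p dvd (of_int_poly R :: 'a poly)"
    by (metis of_rat_of_int of_rat_geom of_rat_poly.hom_dvd)
  then show ?thesis
    using poly_geom_poly_root_of_unity[OF w] by (auto elim: dvdE)
qed

lemma power_eq_1_if_coprime_exponents:
  fixes w :: "'a::comm_monoid_mult"
  assumes "coprime m n" "m \<noteq> 0" "w ^ m = 1" "w ^ n = 1"
  shows "w = 1"
proof -
  obtain x y where "m * x = n * y + 1"
    using bezout_nat[OF \<open>m \<noteq> 0\<close>, of n] \<open>coprime m n\<close> by auto
  then have "w ^ (m * x) = w ^ (n * y) * w" by (simp add: power_add mult.commute)
  then show ?thesis using assms(3,4) by (simp add: power_mult)
qed

lemma card_nontrivial_roots_of_unity:
  "0 < p \<Longrightarrow> card {w::complex. w ^ p = 1 \<and> w \<noteq> 1} = p - 1"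
proof -
  assume "0 < p"
  have "{w::complex. w ^ p = 1 \<and> w \<noteq> 1} = {w. w ^ p = 1} - {1}" by auto
  then show ?thesis using \<open>0 < p\<close> by (simp add: card_Diff_singleton card_roots_unity_eq finite_nth_roots)
qed

lemma int_coeffs_eq_0_if_vanishing_at_roots_of_unity:
  fixes f :: "nat \<Rightarrow> int" and z :: complex and T :: "complex set"
  assumes p: "prime p" "\<not> p dvd N" and z: "z ^ p = 1" "z \<noteq> 1"
    and f_z: "(\<Sum>x<N. of_int (f x) * z ^ x) = 0"
    and T: "finite T" "card T < p"
    and f_roots: "\<And>w. w ^ N = 1 \<Longrightarrow> w \<notin> T \<Longrightarrow> (\<Sum>x<N. of_int (f x) * w ^ x) = 0"
    and "x < N"
  shows "f x = 0"
proof -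
  define P where "P = (\<Sum>x<N. monom (f x) x)"
  have coeff_P: "coeff P i = (if i < N then f i else 0)" for i
    by (simp add: P_def coeff_sum)
  have degree_P: "degree P < N"
    using \<open>x < N\<close> by (intro degree_lessI) (auto simp: coeff_P)
  have poly_P: "poly (of_int_poly P) w = (\<Sum>x<N. of_int (f x) * w ^ x)" for w :: complex
    by (simp add: P_def poly_sum poly_monom hom_distribs)
  have "P = 0"
  proof (rule ccontr)
    assume "P \<noteq> 0"
    then have P': "of_int_poly P \<noteq> (0 :: complex poly)" by simp
    define Z where "Z = {w::complex. w ^ p = 1 \<and> w \<noteq> 1}"
    define U where "U = {w::complex. w ^ N = 1}"
    have "0 < p" "0 < N" using p prime_gt_0_nat \<open>x < N\<close> by auto
    have finite_U: "finite U" unfolding U_def using \<open>0 < N\<close> by (rule finite_nth_roots)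
    have "poly (of_int_poly P) z = 0" using f_z by (simp add: poly_P)
    then have "poly (of_int_poly P) w = 0" if "w \<in> Z" for w
      using that of_int_poly_root_at_prime_roots_of_unity[OF p(1) z] by (simp add: Z_def)
    moreover have "poly (of_int_poly P) w = 0" if "w \<in> U - T" for w
      using that f_roots by (simp add: U_def poly_P)
    ultimately have "Z \<union> (U - T) \<subseteq> {w. poly (of_int_poly P) w = 0}" by blast
    then have "card (Z \<union> (U - T)) \<le> card {w::complex. poly (of_int_poly P) w = 0}"
      using P' by (intro card_mono poly_roots_finite)
    also have "\<dots> \<le> degree P"
      using card_poly_roots_bound[OF P'] by simp
    finally have "card (Z \<union> (U - T)) \<le> degree P" .
    moreover have "coprime p N" using p by (simp add: prime_imp_coprime)
    then have "Z \<inter> U = {}"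
      using power_eq_1_if_coprime_exponents \<open>0 < p\<close> by (auto simp: Z_def U_def)
    then have "card (Z \<union> (U - T)) = card Z + card (U - T)"
      using finite_U \<open>0 < p\<close> by (intro card_Un_disjoint) (auto simp: Z_def)
    moreover have "card Z = p - 1"
      unfolding Z_def using \<open>0 < p\<close> by (rule card_nontrivial_roots_of_unity)
    moreover have "card U - card T \<le> card (U - T)"
      using T(1) by (rule diff_card_le_card_Diff)
    moreover have "card U = N"
      unfolding U_def using \<open>0 < N\<close> by (rule card_roots_unity_eq)
    ultimately show False using degree_P T(2) by linarith
  qed
  then show ?thesis using coeff_P[of x] \<open>x < N\<close> by simp
qed

lemma residue_class_below_multiple:
  fixes n a N :: nat
  assumes "0 < n" "a < n" "n dvd N"
  shows "{x\<in>{..<N}. x mod n = a} = (\<lambda>t. a + n * t) ` {..<N div n}"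
proof (intro equalityI subsetI)
  fix x assume "x \<in> {x\<in>{..<N}. x mod n = a}"
  then have "x mod n = a" and "x < N" by auto
  then have "x = a + n * (x div n)" using mod_mult_div_eq[of x n] by simp
  moreover have "x div n < N div n"
    using \<open>x < N\<close> assms(1,3) by (auto intro: less_mult_imp_div_less elim!: dvdE simp: mult.commute)
  ultimately show "x \<in> (\<lambda>t. a + n * t) ` {..<N div n}" by blast
next
  fix x assume "x \<in> (\<lambda>t. a + n * t) ` {..<N div n}"
  then obtain t where t: "t < N div n" "x = a + n * t" by auto
  have "a + n * t < n * Suc t" using assms by simp
  also have "\<dots> \<le> N" using t assms by (metis dvd_mult_div_cancel mult_le_mono2 Suc_leI)
  finally show "x \<in> {x\<in>{..<N}. x mod n = a}" using t assms by simp
qed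

lemma sum_powers_residue_class:
  fixes w :: "'a::field"
  assumes "0 < n" "a < n" "n dvd N" "w ^ n \<noteq> 1"
  shows "(\<Sum>x<N. if x mod n = a then w ^ x else 0) = w ^ a * (1 - w ^ N) / (1 - w ^ n)"
proof -
  have "(\<Sum>x<N. if x mod n = a then w ^ x else 0) = (\<Sum>x\<in>{x\<in>{..<N}. x mod n = a}. w ^ x)"
    by (rule sum.inter_filter[symmetric]) simp
  also have "\<dots> = (\<Sum>t<N div n. w ^ (a + n * t))"
    unfolding residue_class_below_multiple[OF assms(1-3)]
    using assms(1) by (subst sum.reindex) (auto simp: inj_on_def)
  also have "\<dots> = w ^ a * (\<Sum>t<N div n. (w ^ n) ^ t)"
    by (simp add: power_add power_mult sum_distrib_left)
  also have "\<dots> = w ^ a * (1 - (w ^ n) ^ (N div n)) / (1 - w ^ n)"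
    using assms(4) by (simp add: sum_gp_strict)
  also have "(w ^ n) ^ (N div n) = w ^ N"
    using assms(3) by (simp flip: power_mult)
  finally show ?thesis .
qed

lemma generating_function_of_count:
  fixes w :: "'a::field" and a n :: "'b \<Rightarrow> nat"
  assumes "finite K" and K: "\<forall>s\<in>K. 0 < n s \<and> a s < n s \<and> n s dvd N \<and> w ^ n s \<noteq> 1"
    and "w \<noteq> 1"
  shows "(\<Sum>x<N. (of_nat (card {s\<in>K. x mod n s = a s}) - of_nat m) * w ^ x)
     = (1 - w ^ N) * ((\<Sum>s\<in>K. w ^ a s / (1 - w ^ n s)) - of_nat m / (1 - w))"
proof -
  have "(\<Sum>x<N. of_nat (card {s\<in>K. x mod n s = a s}) * w ^ x)
      = (\<Sum>x<N. \<Sum>s\<in>K. if x mod n s = a s then w ^ x else 0)"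
    using \<open>finite K\<close> by (simp add: sum.If_cases Int_def)
  also have "\<dots> = (\<Sum>s\<in>K. \<Sum>x<N. if x mod n s = a s then w ^ x else 0)"
    by (rule sum.swap)
  also have "\<dots> = (\<Sum>s\<in>K. w ^ a s * (1 - w ^ N) / (1 - w ^ n s))"
    using K by (intro sum.cong refl sum_powers_residue_class) auto
  finally have count: "(\<Sum>x<N. of_nat (card {s\<in>K. x mod n s = a s}) * w ^ x)
      = (1 - w ^ N) * (\<Sum>s\<in>K. w ^ a s / (1 - w ^ n s))"
    by (simp add: sum_distrib_left mult.commute)
  have const: "(\<Sum>x<N. of_nat m * w ^ x) = (1 - w ^ N) * (of_nat m / (1 - w))"
    using \<open>w \<noteq> 1\<close> by (simp add: sum_distrib_left[symmetric] sum_gp_strict)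
  have "(\<Sum>x<N. (of_nat (card {s\<in>K. x mod n s = a s}) - of_nat m) * w ^ x)
      = (\<Sum>x<N. of_nat (card {s\<in>K. x mod n s = a s}) * w ^ x) - (\<Sum>x<N. of_nat m * w ^ x)"
    by (simp add: left_diff_distrib sum_subtractf)
  then show ?thesis
    by (simp add: count const right_diff_distrib)
qed

lemma finite_roots_of_unity_Union:
  "finite K \<Longrightarrow> \<forall>s\<in>K. 0 < n s \<Longrightarrow> finite {w::complex. \<exists>s\<in>K. w ^ n s = 1}"
  by (simp add: Collect_bex_eq finite_nth_roots)

lemma count_eq_const_iff_sum_at_prime_root:
  fixes a n :: "'b \<Rightarrow> nat" and z :: complex
  assumes "finite K" "K \<noteq> {}" and K: "\<forall>s\<in>K. 0 < n s \<and> a s < n s \<and> n s dvd N" and "0 < N"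
    and p: "prime p" "\<not> p dvd N" and z: "z ^ p = 1" "z \<noteq> 1"
    and card_T: "card {w::complex. \<exists>s\<in>K. w ^ n s = 1} < p"
  shows "(\<forall>x<N. card {s\<in>K. x mod n s = a s} = m)
    \<longleftrightarrow> (\<Sum>s\<in>K. z ^ a s / (1 - z ^ n s)) = of_nat m / (1 - z)"
proof -
  define T where "T = {w::complex. \<exists>s\<in>K. w ^ n s = 1}"
  define c where "c x = int (card {s\<in>K. x mod n s = a s}) - int m" for x
  define E where "E w = (\<Sum>x<N. of_int (c x) * w ^ x)" for w :: complex
  define F where "F w = (\<Sum>s\<in>K. w ^ a s / (1 - w ^ n s)) - of_nat m / (1 - w)" for w :: complex
  have E_F: "E w = (1 - w ^ N) * F w" if "w \<notin> T" for w
  proof -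
    have "w \<noteq> 1" using that \<open>K \<noteq> {}\<close> by (auto simp: T_def)
    then show ?thesis
      using generating_function_of_count[OF \<open>finite K\<close>, of n a N w m] K that
      by (simp add: E_def F_def c_def T_def)
  qed
  have "coprime p N" using p by (simp add: prime_imp_coprime)
  then have "z ^ N \<noteq> 1"
    using power_eq_1_if_coprime_exponents z prime_gt_0_nat[OF p(1)] by blast
  moreover have "z \<notin> T"
    using K \<open>z ^ N \<noteq> 1\<close> by (auto simp: T_def elim!: dvdE simp: power_mult)
  ultimately have F_z: "F z = 0 \<longleftrightarrow> E z = 0" using E_F by simp
  have "(\<forall>x<N. c x = 0) \<longleftrightarrow> E z = 0"
  proof
    assume "E z = 0"
    moreover have "E w = 0" if "w ^ N = 1" "w \<notin> T" for w
      using E_F that by simp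
    moreover have "finite T"
      unfolding T_def using \<open>finite K\<close> K by (intro finite_roots_of_unity_Union) auto
    ultimately show "\<forall>x<N. c x = 0"
      using int_coeffs_eq_0_if_vanishing_at_roots_of_unity[OF p z, of c T] card_T
      unfolding E_def T_def by blast
  qed (simp add: E_def)
  then show ?thesis
    using F_z by (simp add: F_def c_def)
qed

lemma prime_not_dvd_prod_if_card_roots_of_unity_less:
  fixes n :: "'b \<Rightarrow> nat"
  assumes "finite K" and n: "\<forall>s\<in>K. 0 < n s" and p: "prime p"
    and card_T: "card {w::complex. \<exists>s\<in>K. w ^ n s = 1} < p"
  shows "\<not> p dvd (\<Prod>s\<in>K. n s)"
proof
  assume "p dvd (\<Prod>s\<in>K. n s)"
  then obtain s where s: "s \<in> K" "p dvd n s"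
    using p \<open>finite K\<close> by (auto simp: prime_dvd_prod_iff)
  have "n s = card {w::complex. w ^ n s = 1}"
    using n s(1) by (simp add: card_roots_unity_eq)
  also have "\<dots> \<le> card {w::complex. \<exists>s\<in>K. w ^ n s = 1}"
    using s(1) \<open>finite K\<close> n by (intro card_mono finite_roots_of_unity_Union) auto
  finally have "n s < p" using card_T by linarith
  then show False using s n by (auto dest: dvd_imp_le)
qed

lemma primitive_root_cis:
  assumes "1 < p"
  shows "cis (2 * pi / real p) ^ p = 1" and "cis (2 * pi / real p) \<noteq> 1"
proof -
  define f where "f k = cis (2 * pi * real k / real p)" for k :: nat
  have roots: "bij_betw f {..<p} {z. z ^ p = 1}"
    unfolding f_def using assms by (intro bij_betw_roots_unity) simp
  then show "cis (2 * pi / real p) ^ p = 1"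
    using bij_betwE[OF roots, rule_format, of 1] assms by (simp add: f_def)
  have "f 1 \<noteq> f 0"
    using bij_betw_imp_inj_on[OF roots] assms by (auto dest: inj_onD)
  then show "cis (2 * pi / real p) \<noteq> 1" by (simp add: f_def)
qed

lemma of_nat_in_res_class_iff:
  assumes "0 \<le> a" "a < n"
  shows "int x \<in> res_class a n \<longleftrightarrow> x mod nat n = nat a"
proof -
  have "int x mod n = int (x mod nat n)" using assms by (simp add: zmod_int)
  then show ?thesis using assms by (auto simp: res_class_def)
qed

lemma exact_m_cover_iff_count_below:
  assumes an: "\<forall>s\<in>{1..k}. 0 \<le> a s \<and> a s < n s"
    and "0 < N" and N: "\<forall>s\<in>{1..k}. nat (n s) dvd N"
  shows "exact_m_cover m k a n \<longleftrightarrow> (\<forall>x<N. card {s\<in>{1..k}. x mod nat (n s) = nat (a s)} = m)"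
proof -
  have count: "{s\<in>{1..k}. int x \<in> res_class (a s) (n s)} = {s\<in>{1..k}. x mod nat (n s) = nat (a s)}"
    for x using an by (auto simp: of_nat_in_res_class_iff)
  have periodic: "y \<in> res_class (a s) (n s) \<longleftrightarrow> y mod int N \<in> res_class (a s) (n s)"
    if "s \<in> {1..k}" for y s
  proof -
    have "int (nat (n s)) dvd int N" using N that by (simp only: int_dvd_int_iff)
    moreover have "0 \<le> n s" using an that by force
    ultimately have "n s dvd int N" by simp
    then show ?thesis by (simp add: res_class_def mod_mod_cancel)
  qed
  show ?thesis
  proof
    assume "exact_m_cover m k a n"
    then show "\<forall>x<N. card {s\<in>{1..k}. x mod nat (n s) = nat (a s)} = m"
      unfolding exact_m_cover_def count[symmetric] by blast
  next
    assume below: "\<forall>x<N. card {s\<in>{1..k}. x mod nat (n s) = nat (a s)} = m"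
    show "exact_m_cover m k a n"
      unfolding exact_m_cover_def
    proof
      fix y :: int
      define x where "x = nat (y mod int N)"
      have "x < N" and "int x = y mod int N"
        using \<open>0 < N\<close> by (simp_all add: x_def nat_less_iff)
      then have "{s\<in>{1..k}. y \<in> res_class (a s) (n s)} = {s\<in>{1..k}. int x \<in> res_class (a s) (n s)}"
        using periodic by auto
      then show "card {s\<in>{1..k}. y \<in> res_class (a s) (n s)} = m"
        using below \<open>x < N\<close> by (simp only: count)
    qed
  qed
qed

lemma card_roots_of_unity_le_card_S_set:
  assumes n: "\<forall>s\<in>{1..k}. 0 < n s"
  shows "card {w::complex. \<exists>s\<in>{1..k}. w ^ nat (n s) = 1} \<le> card (S_set k n)"
proof -
  have "S_set k n \<subseteq> (\<Union>s\<in>{1..k}. (\<lambda>r. of_int r / of_int (n s)) ` {0..<n s})"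
    unfolding S_set_def by auto
  then have "finite (S_set k n)" by (rule finite_subset) simp
  moreover have "{w::complex. \<exists>s\<in>{1..k}. w ^ nat (n s) = 1}
      \<subseteq> (\<lambda>\<theta>. cis (2 * pi * of_rat \<theta>)) ` S_set k n"
  proof
    fix w :: complex assume "w \<in> {w. \<exists>s\<in>{1..k}. w ^ nat (n s) = 1}"
    then obtain s where s: "s \<in> {1..k}" "w ^ nat (n s) = 1" by blast
    then obtain r where r: "r < nat (n s)" "w = cis (2 * pi * real r / real (nat (n s)))"
      using bij_betw_roots_unity[of "nat (n s)"] n unfolding bij_betw_def by force
    define \<theta> where "\<theta> = (of_int (int r) / of_int (n s) :: rat)"
    have "\<theta> \<in> S_set k n"
      unfolding S_set_def \<theta>_def using s r by (intro CollectI exI[of _ "int r"] exI[of _ s]) auto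
    moreover have "w = cis (2 * pi * of_rat \<theta>)"
      using r s n by (simp add: \<theta>_def of_rat_divide)
    ultimately show "w \<in> (\<lambda>\<theta>. cis (2 * pi * of_rat \<theta>)) ` S_set k n" by blast
  qed
  ultimately have "card {w::complex. \<exists>s\<in>{1..k}. w ^ nat (n s) = 1}
      \<le> card ((\<lambda>\<theta>. cis (2 * pi * of_rat \<theta>)) ` S_set k n)"
    by (intro card_mono finite_imageI)
  also have "\<dots> \<le> card (S_set k n)"
    using \<open>finite (S_set k n)\<close> by (rule card_image_le)
  finally show ?thesis .
qed

lemma exact_m_cover_iff_sum_at_prime_root:
  fixes z :: complex
  assumes "k \<noteq> 0" and an: "\<forall>s\<in>{1..k}. 0 \<le> a s \<and> a s < n s"
    and p: "prime p" and card_T: "card {w::complex. \<exists>s\<in>{1..k}. w ^ nat (n s) = 1} < p"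
    and z: "z ^ p = 1" "z \<noteq> 1"
  shows "exact_m_cover m k a n
    \<longleftrightarrow> (\<Sum>s\<in>{1..k}. z ^ nat (a s) / (1 - z ^ nat (n s))) = of_nat m / (1 - z)"
proof -
  define N where "N = (\<Prod>s\<in>{1..k}. nat (n s))"
  have n_pos: "\<forall>s\<in>{1..k}. 0 < nat (n s)" using an by auto
  have N: "0 < N" "\<not> p dvd N" "\<forall>s\<in>{1..k}. nat (n s) dvd N"
    using n_pos prime_not_dvd_prod_if_card_roots_of_unity_less[OF _ n_pos p card_T]
    by (auto simp: N_def prod_pos intro: dvd_prodI simp del: nat_0_less_mult_iff)
  have "exact_m_cover m k a n \<longleftrightarrow> (\<forall>x<N. card {s\<in>{1..k}. x mod nat (n s) = nat (a s)} = m)"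
    using an N by (intro exact_m_cover_iff_count_below) auto
  also have "\<dots> \<longleftrightarrow> (\<Sum>s\<in>{1..k}. z ^ nat (a s) / (1 - z ^ nat (n s))) = of_nat m / (1 - z)"
    using \<open>k \<noteq> 0\<close> an N p z card_T
    by (intro count_eq_const_iff_sum_at_prime_root) auto
  finally show ?thesis .
qed

theorem corollary1p1:
  fixes m k :: nat and a n :: "nat \<Rightarrow> int" and p :: nat
  assumes "m > 0"
    and "\<forall>s\<in>{1..k}. n s > 0 \<and> 0 \<le> a s \<and> a s < n s"
    and "prime p"
    and "p > card (S_set k n)"
  shows "exact_m_cover m k a n \<longleftrightarrow>
    (\<Sum>s=1..k. cis (2 * pi * of_int (a s) / real p) / (1 - cis (2 * pi * of_int (n s) / real p)))
      = of_nat m / (1 - cis (2 * pi / real p))"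
proof (cases "k = 0")
  case True
  then show ?thesis
    using assms(1) primitive_root_cis(2) prime_gt_1_nat[OF assms(3)] by (simp add: exact_m_cover_def)
next
  case False
  define z where "z = cis (2 * pi / real p)"
  have cis_z: "cis (2 * pi * of_int j / real p) = z ^ nat j" if "0 \<le> j" for j
    using that by (simp add: z_def DeMoivre mult_ac)
  have "(\<Sum>s=1..k. cis (2 * pi * of_int (a s) / real p) / (1 - cis (2 * pi * of_int (n s) / real p)))
      = (\<Sum>s\<in>{1..k}. z ^ nat (a s) / (1 - z ^ nat (n s)))"
    using assms(2) by (intro sum.cong refl) (simp add: cis_z order.strict_implies_order)
  moreover have "card {w::complex. \<exists>s\<in>{1..k}. w ^ nat (n s) = 1} < p"
    using card_roots_of_unity_le_card_S_set[of k n] assms(2,4) by simp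
  moreover have "z ^ p = 1" "z \<noteq> 1"
    using primitive_root_cis prime_gt_1_nat[OF assms(3)] by (simp_all add: z_def)
  ultimately show ?thesis
    using exact_m_cover_iff_sum_at_prime_root[OF False _ assms(3), of a n z m] assms(2)
    by (simp add: z_def)
qed

end
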